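(* Let $n\ge 2$, $d\ge n+1$, and let $f$ be a Perazzo form of degree $d$ in $S$. If $A_f$ has the weak Lefschetz property, then $d\ge 2n$.
   Context: $K$ is an algebraically closed field of characteristic zero. $S=K[x_0,\dots,x_n,u,v]$ and $R=K[y_0,\dots,y_n,U,V]$ acts on $S$ by differentiation ($y_i=\partial/\partial x_i$, $U=\partial/\partial u$, $V=\partial/\partial v$). A Perazzo form of degree $d$ is $f=x_0p_0+x_1p_1+\cdots+x_np_n+g$ where $p_0,\dots,p_n\in K[u,v]_{d-1}$ are linearly independent but algebraically dependent forms and $g\in K[u,v]_d$. $\operatorname{Ann}_R(f)=\{\theta\in R:\theta\circ f=0\}$ and $A_f=R/\operatorname{Ann}_R(f)$ is a graded artinian Gorenstein algebra of socle degree $d$. A graded artinian algebra $A$ has the weak Lefschetz property (WLP) if there is $\ell\in[A]_1$ such that multiplication $\times\ell:[A]_i\to[A]_{i+1}$ has maximal rank (is injective or surjective) for every $i\ge 0$. *)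

theory Defs
  imports "HOL-Library.Poly_Mapping" "HOL-Computational_Algebra.Polynomial"
begin

type_synonym 'a mpoly = "(nat \<Rightarrow>\<^sub>0 nat) \<Rightarrow>\<^sub>0 'a"

definition alg_closed_field :: "'a::field itself \<Rightarrow> bool" where
  "alg_closed_field _ \<longleftrightarrow> (\<forall>p :: 'a poly. degree p \<ge> 1 \<longrightarrow> (\<exists>x. poly p x = 0))"

definition mconst :: "'a::comm_ring_1 \<Rightarrow> 'a mpoly" where
  "mconst c = Poly_Mapping.single 0 c"

definition mvar :: "nat \<Rightarrow> 'a::comm_ring_1 mpoly" where
  "mvar j = Poly_Mapping.single (Poly_Mapping.single j 1) 1"

definition mon_deg :: "(nat \<Rightarrow>\<^sub>0 nat) \<Rightarrow> nat" where
  "mon_deg \<alpha> = (\<Sum>j\<in>Poly_Mapping.keys \<alpha>. Poly_Mapping.lookup \<alpha> j)"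

definition form_in :: "nat set \<Rightarrow> nat \<Rightarrow> 'a::comm_ring_1 mpoly \<Rightarrow> bool" where
  "form_in V d p \<longleftrightarrow> (\<forall>\<alpha>\<in>Poly_Mapping.keys p. mon_deg \<alpha> = d \<and> Poly_Mapping.keys \<alpha> \<subseteq> V)"

definition poly_in :: "nat set \<Rightarrow> 'a::comm_ring_1 mpoly \<Rightarrow> bool" where
  "poly_in V p \<longleftrightarrow> (\<forall>\<alpha>\<in>Poly_Mapping.keys p. Poly_Mapping.keys \<alpha> \<subseteq> V)"

definition msubst :: "'a::comm_ring_1 mpoly \<Rightarrow> (nat \<Rightarrow> 'a mpoly) \<Rightarrow> 'a mpoly" where
  "msubst F P = (\<Sum>\<alpha>\<in>Poly_Mapping.keys F. mconst (Poly_Mapping.lookup F \<alpha>) * (\<Prod>j\<in>Poly_Mapping.keys \<alpha>. P j ^ Poly_Mapping.lookup \<alpha> j))"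

text \<open>Action of the ring of differential operators by differentiation:
  the variable j of theta acts as partial derivative w.r.t. variable j of f, so
  y^alpha o x^beta = beta!/(beta-alpha)! x^(beta-alpha) if alpha <= beta, and 0 otherwise.\<close>
definition diff_act :: "'a::field_char_0 mpoly \<Rightarrow> 'a mpoly \<Rightarrow> 'a mpoly" (infixr \<open>\<circ>\<^sub>D\<close> 70) where
  "\<theta> \<circ>\<^sub>D f = (\<Sum>\<alpha>\<in>Poly_Mapping.keys \<theta>. \<Sum>\<beta>\<in>{\<beta>\<in>Poly_Mapping.keys f. \<forall>j. Poly_Mapping.lookup \<alpha> j \<le> Poly_Mapping.lookup \<beta> j}.
      Poly_Mapping.single (\<beta> - \<alpha>)
        (Poly_Mapping.lookup \<theta> \<alpha> * Poly_Mapping.lookup f \<beta> *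
          (\<Prod>j\<in>Poly_Mapping.keys \<beta>. of_nat (fact (Poly_Mapping.lookup \<beta> j)) / of_nat (fact (Poly_Mapping.lookup \<beta> j - Poly_Mapping.lookup \<alpha> j)))))"

text \<open>Variables: x_0..x_n are 0..n, u is n+1, v is n+2 (same indexing for y_i, U, V in R).\<close>
definition all_vars :: "nat \<Rightarrow> nat set" where
  "all_vars n = {..n+2}"

definition uv_vars :: "nat \<Rightarrow> nat set" where
  "uv_vars n = {n+1, n+2}"

definition Ann :: "nat \<Rightarrow> 'a::field_char_0 mpoly \<Rightarrow> 'a mpoly set" where
  "Ann n f = {\<theta>. poly_in (all_vars n) \<theta> \<and> \<theta> \<circ>\<^sub>D f = 0}"

definition perazzo_form :: "nat \<Rightarrow> nat \<Rightarrow> 'a::field_char_0 mpoly \<Rightarrow> bool" where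
  "perazzo_form n d f \<longleftrightarrow>
    (\<exists>P :: nat \<Rightarrow> 'a mpoly. \<exists>g.
       (\<forall>i\<le>n. form_in (uv_vars n) (d - 1) (P i)) \<and>
       form_in (uv_vars n) d g \<and>
       \<comment> \<open>linearly independent\<close>
       (\<forall>c :: nat \<Rightarrow> 'a. (\<Sum>i\<le>n. mconst (c i) * P i) = 0 \<longrightarrow> (\<forall>i\<le>n. c i = 0)) \<and>
       \<comment> \<open>algebraically dependent\<close>
       (\<exists>F :: 'a mpoly. F \<noteq> 0 \<and> poly_in {..n} F \<and> msubst F P = 0) \<and>
       f = (\<Sum>i\<le>n. mvar i * P i) + g)"

text \<open>Multiplication by ell : [A_f]_i -> [A_f]_(i+1) has maximal rank, where
  [A_f]_i = R_i / (Ann f)_i.\<close>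
definition mult_injective :: "nat \<Rightarrow> 'a::field_char_0 mpoly \<Rightarrow> 'a mpoly \<Rightarrow> nat \<Rightarrow> bool" where
  "mult_injective n f l i \<longleftrightarrow>
     (\<forall>\<theta>. form_in (all_vars n) i \<theta> \<longrightarrow> l * \<theta> \<in> Ann n f \<longrightarrow> \<theta> \<in> Ann n f)"

definition mult_surjective :: "nat \<Rightarrow> 'a::field_char_0 mpoly \<Rightarrow> 'a mpoly \<Rightarrow> nat \<Rightarrow> bool" where
  "mult_surjective n f l i \<longleftrightarrow>
     (\<forall>\<psi>. form_in (all_vars n) (i+1) \<psi> \<longrightarrow>
        (\<exists>\<theta>. form_in (all_vars n) i \<theta> \<and> \<psi> - l * \<theta> \<in> Ann n f))"

text \<open>Weak Lefschetz property of A_f = R/Ann_R(f); a linear element of A_f is the class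
  of a linear form ell of R.\<close>
definition has_WLP :: "nat \<Rightarrow> 'a::field_char_0 mpoly \<Rightarrow> bool" where
  "has_WLP n f \<longleftrightarrow>
     (\<exists>l. form_in (all_vars n) 1 l \<and>
        (\<forall>i. mult_injective n f l i \<or> mult_surjective n f l i))"

end

theory Submission
  imports Defs
begin

text \<open>
  Suppose \<open>d < 2n\<close> and put \<open>k = d - n\<close>, so \<open>1 \<le> k < n\<close>.  The derivatives \<open>y\<^sub>i \<circ> f = p\<^sub>i\<close> are
  \<open>n + 1\<close> linearly independent binary forms of degree \<open>d - 1\<close>, so their span contains forms with
  at least \<open>n + 1\<close> distinct lowest exponents of \<open>u\<close>.  Differentiating these by monomials of order
  \<open>j - 1\<close> in \<open>U, V\<close> shifts the lowest exponents down, and when \<open>d \<le> n + j\<close> every window of \<open>j\<close>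
  consecutive exponents is hit; hence every binary form of degree \<open>d - j\<close> is \<open>\<theta> \<circ> f\<close> with
  \<open>deg \<theta> = j\<close>.  A linear form \<open>\<ell>\<close> annihilates some nonzero binary form of each positive degree
  \<open>m\<close>, as it maps an \<open>(m + 1)\<close>-dimensional space into an \<open>m\<close>-dimensional one.  Such a form of
  degree \<open>n = d - k\<close> shows that \<open>\<times>\<ell>\<close> is not injective in degree \<open>k\<close>, and one of degree
  \<open>k + 1 = d - (n - 1)\<close> shows that it is not surjective there.
\<close>

context vector_space
begin

lemma independent_image_if_coeffs_zero:
  assumes "finite I" and coeffs_zero: "\<forall>c. (\<Sum>i\<in>I. c i *s F i) = 0 \<longrightarrow> (\<forall>i\<in>I. c i = 0)"
  shows "inj_on F I" and "independent (F ` I)"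
proof -
  show inj: "inj_on F I"
  proof (rule inj_onI, rule ccontr)
    fix i i' assume ii: "i \<in> I" "i' \<in> I" "F i = F i'" "i \<noteq> i'"
    define c :: "_ \<Rightarrow> 'a" where "c k = (if k = i then 1 else if k = i' then -1 else 0)" for k
    have "(\<Sum>k\<in>I. c k *s F k) = (\<Sum>k\<in>I. (if k = i then F k else 0) - (if k = i' then F k else 0))"
      by (rule sum.cong) (use ii in \<open>auto simp: c_def\<close>)
    also have "\<dots> = 0" using ii \<open>finite I\<close> by (simp add: sum_subtractf)
    finally have "c i = 0" using coeffs_zero ii by blast
    then show False by (simp add: c_def)
  qed
  show "independent (F ` I)"
  proof
    assume "dependent (F ` I)"
    then obtain w where w: "\<exists>x\<in>F ` I. w x \<noteq> 0" "(\<Sum>x\<in>F ` I. w x *s x) = 0"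
      using dependent_finite \<open>finite I\<close> by auto
    then have "(\<Sum>i\<in>I. w (F i) *s F i) = 0" by (simp add: sum.reindex[OF inj])
    with w(1) coeffs_zero show False by auto
  qed
qed

lemma exists_nontrivial_relation:
  assumes "finite I" "finite Y" "card Y < card I" "F ` I \<subseteq> span Y"
  shows "\<exists>c. (\<exists>i\<in>I. c i \<noteq> 0) \<and> (\<Sum>i\<in>I. c i *s F i) = 0"
proof (rule ccontr)
  assume "\<nexists>c. (\<exists>i\<in>I. c i \<noteq> 0) \<and> (\<Sum>i\<in>I. c i *s F i) = 0"
  then have "inj_on F I" "independent (F ` I)"
    using independent_image_if_coeffs_zero[OF \<open>finite I\<close>] by blast+
  then have "card I \<le> card Y"
    using independent_span_bound[OF \<open>finite Y\<close>] assms(4) by (metis card_image)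
  with assms(3) show False by simp
qed

end

abbreviation "lookup \<equiv> Poly_Mapping.lookup"
abbreviation "keys \<equiv> Poly_Mapping.keys"
abbreviation "single \<equiv> Poly_Mapping.single"

lemma lookup_mconst_mult: "lookup (mconst c * p) g = c * lookup p g"
  by (simp add: mconst_def flip: mult_map_scale_conv_mult) (simp add: map.rep_eq when_def)

lemma keys_mconst_mult: "keys (mconst c * p) \<subseteq> keys p"
  by (auto simp: in_keys_iff lookup_mconst_mult)

lemma single_neq_zero: "c \<noteq> 0 \<Longrightarrow> single k c \<noteq> 0"
  by (metis lookup_single_eq lookup_zero)

interpretation mpoly_vs: vector_space "\<lambda>c (p::'a::field_char_0 mpoly). mconst c * p"
  by unfold_locales (simp_all add: mconst_def algebra_simps single_add mult_single flip: mult.assoc)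

text \<open>The factor \<open>(g + a)! / g!\<close> by which \<open>y\<^sup>a\<close> turns \<open>x\<^sup>g\<^sup>+\<^sup>a\<close> into a multiple of \<open>x\<^sup>g\<close>.\<close>
definition deriv_factor :: "(nat \<Rightarrow>\<^sub>0 nat) \<Rightarrow> (nat \<Rightarrow>\<^sub>0 nat) \<Rightarrow> 'a::field_char_0" where
  "deriv_factor g a =
     (\<Prod>j\<in>keys (g + a). of_nat (fact (lookup (g + a) j)) / of_nat (fact (lookup g j)))"

lemma deriv_factor_nonzero: "deriv_factor g a \<noteq> 0"
  unfolding deriv_factor_def by (auto simp: prod_zero_iff)

lemma deriv_factor_superset:
  assumes "finite T" "keys (g + a) \<subseteq> T"
  shows "deriv_factor g a = (\<Prod>j\<in>T. of_nat (fact (lookup (g + a) j)) / of_nat (fact (lookup g j)))"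
  unfolding deriv_factor_def
  by (rule prod.mono_neutral_left) (use assms in \<open>auto simp: in_keys_iff lookup_add\<close>)

lemma deriv_factor_add: "deriv_factor (g + a) b * deriv_factor g a = deriv_factor g (a + b)"
proof -
  let ?T = "keys (g + a + b)"
  let ?q = "\<lambda>h h' j. of_nat (fact (lookup h j)) / of_nat (fact (lookup h' j)) :: 'a"
  have "deriv_factor (g + a) b = (\<Prod>j\<in>?T. ?q (g + a + b) (g + a) j)"
    by (rule deriv_factor_superset) auto
  moreover have "deriv_factor g a = (\<Prod>j\<in>?T. ?q (g + a) g j)"
    by (rule deriv_factor_superset) (auto simp: in_keys_iff lookup_add)
  moreover have "deriv_factor g (a + b) = (\<Prod>j\<in>?T. ?q (g + a + b) g j)"
    by (simp add: deriv_factor_def add.assoc)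
  ultimately show ?thesis by (simp flip: prod.distrib)
qed

lemma deriv_factor_var: "i \<notin> keys g \<Longrightarrow> deriv_factor g (single i 1) = 1"
  unfolding deriv_factor_def
  by (rule prod.neutral) (auto simp: lookup_add in_keys_iff lookup_single when_def)

lemma lookup_diff_act:
  "lookup (\<theta> \<circ>\<^sub>D f) g = (\<Sum>a\<in>keys \<theta>. lookup \<theta> a * lookup f (g + a) * deriv_factor g a)"
proof -
  have "lookup (\<Sum>b\<in>{b\<in>keys f. \<forall>j. lookup a j \<le> lookup b j}. single (b - a) (X b)) g
     = lookup \<theta> a * lookup f (g + a) * deriv_factor g a"
    if X: "X = (\<lambda>b. lookup \<theta> a * lookup f b *
        (\<Prod>j\<in>keys b. of_nat (fact (lookup b j)) / of_nat (fact (lookup b j - lookup a j))))"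
    for a X
  proof -
    let ?S = "{b\<in>keys f. \<forall>j. lookup a j \<le> lookup b j}"
    have "b - a = g \<longleftrightarrow> b = g + a" if "b \<in> ?S" for b
      using that by (auto simp: poly_mapping_eq_iff fun_eq_iff lookup_minus lookup_add)
        (metis le_add_diff_inverse2)
    then have "lookup (\<Sum>b\<in>?S. single (b - a) (X b)) g = (\<Sum>b\<in>?S. if b = g + a then X b else 0)"
      by (auto simp: lookup_sum lookup_single when_def intro: sum.cong)
    also have "\<dots> = (if g + a \<in> ?S then X (g + a) else 0)"
      by (subst sum.delta) auto
    also have "\<dots> = lookup \<theta> a * lookup f (g + a) * deriv_factor g a"
      by (auto simp: X deriv_factor_def lookup_add in_keys_iff)
    finally show ?thesis .
  qed
  then show ?thesis unfolding diff_act_def lookup_sum by simp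
qed

lemma lookup_diff_act_superset:
  assumes "finite S" "keys \<theta> \<subseteq> S"
  shows "lookup (\<theta> \<circ>\<^sub>D f) g = (\<Sum>a\<in>S. lookup \<theta> a * lookup f (g + a) * deriv_factor g a)"
  unfolding lookup_diff_act
  by (rule sum.mono_neutral_left) (use assms in \<open>auto simp: in_keys_iff\<close>)

lemma lookup_single_diff_act: "lookup (single a c \<circ>\<^sub>D f) g = c * lookup f (g + a) * deriv_factor g a"
  by (subst lookup_diff_act_superset[of "{a}"]) (auto simp: lookup_single)

lemma diff_act_0_left [simp]: "0 \<circ>\<^sub>D f = 0"
  by (simp add: diff_act_def)

lemma diff_act_add_left: "(\<theta> + \<eta>) \<circ>\<^sub>D f = \<theta> \<circ>\<^sub>D f + \<eta> \<circ>\<^sub>D f"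
proof (rule poly_mapping_eqI)
  fix g
  let ?S = "keys \<theta> \<union> keys \<eta>"
  have "keys (\<theta> + \<eta>) \<subseteq> ?S" by (rule keys_add)
  then show "lookup ((\<theta> + \<eta>) \<circ>\<^sub>D f) g = lookup (\<theta> \<circ>\<^sub>D f + \<eta> \<circ>\<^sub>D f) g"
    by (simp add: lookup_add lookup_diff_act_superset[of ?S] sum.distrib algebra_simps)
qed

lemma diff_act_diff_left: "(\<theta> - \<eta>) \<circ>\<^sub>D f = \<theta> \<circ>\<^sub>D f - \<eta> \<circ>\<^sub>D f"
proof (rule poly_mapping_eqI)
  fix g
  let ?S = "keys \<theta> \<union> keys \<eta>"
  have "keys (\<theta> - \<eta>) \<subseteq> ?S" by (auto simp: in_keys_iff lookup_minus)
  then show "lookup ((\<theta> - \<eta>) \<circ>\<^sub>D f) g = lookup (\<theta> \<circ>\<^sub>D f - \<eta> \<circ>\<^sub>D f) g"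
    by (simp add: lookup_minus lookup_diff_act_superset[of ?S] sum_subtractf algebra_simps)
qed

lemma diff_act_mconst_left: "(mconst c * \<theta>) \<circ>\<^sub>D f = mconst c * (\<theta> \<circ>\<^sub>D f)"
  by (rule poly_mapping_eqI)
    (unfold lookup_diff_act_superset[OF finite_keys keys_mconst_mult],
      unfold lookup_mconst_mult lookup_diff_act, simp add: sum_distrib_left mult_ac)

lemma diff_act_0_right [simp]: "\<theta> \<circ>\<^sub>D 0 = 0"
  by (simp add: diff_act_def)

lemma diff_act_add_right: "\<theta> \<circ>\<^sub>D (f + h) = \<theta> \<circ>\<^sub>D f + \<theta> \<circ>\<^sub>D h"
  by (rule poly_mapping_eqI) (simp add: lookup_add lookup_diff_act sum.distrib algebra_simps)

lemma diff_act_mconst_right: "\<theta> \<circ>\<^sub>D (mconst c * f) = mconst c * (\<theta> \<circ>\<^sub>D f)"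
  by (rule poly_mapping_eqI)
    (unfold lookup_diff_act lookup_mconst_mult, simp add: sum_distrib_left mult_ac)

lemma diff_act_sum_right: "\<theta> \<circ>\<^sub>D (\<Sum>i\<in>I. f i) = (\<Sum>i\<in>I. \<theta> \<circ>\<^sub>D f i)"
  by (induction I rule: infinite_finite_induct) (auto simp: diff_act_add_right)

lemma update_eq_add_single:
  "a \<notin> keys f \<Longrightarrow> Poly_Mapping.update a b f = f + single a b"
  by (rule poly_mapping_eqI) (auto simp: lookup_update lookup_add lookup_single in_keys_iff when_def)

lemma diff_act_mult: "(\<theta> * \<eta>) \<circ>\<^sub>D f = \<theta> \<circ>\<^sub>D (\<eta> \<circ>\<^sub>D f)"
proof (induction \<theta> rule: update_induct)
  case const
  then show ?case by simp
next
  case (update \<theta> a c)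
  have monomials: "(single a c * single b e) \<circ>\<^sub>D f = single a c \<circ>\<^sub>D (single b e \<circ>\<^sub>D f)" for b e
    by (rule poly_mapping_eqI)
      (unfold mult_single lookup_single_diff_act deriv_factor_add[symmetric],
        simp add: add.assoc mult_ac)
  have "(single a c * \<eta>) \<circ>\<^sub>D f = single a c \<circ>\<^sub>D (\<eta> \<circ>\<^sub>D f)"
  proof (induction \<eta> rule: update_induct)
    case const
    then show ?case by simp
  next
    case (update \<eta> b e)
    then show ?case
      by (simp add: update_eq_add_single distrib_left diff_act_add_left diff_act_add_right monomials)
  qed
  with update show ?case
    by (simp add: update_eq_add_single distrib_right diff_act_add_left)
qed

lemma keys_add_exponents: "keys ((a::nat \<Rightarrow>\<^sub>0 nat) + b) = keys a \<union> keys b"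
  by (auto simp: in_keys_iff lookup_add)

lemma mon_deg_superset: "finite S \<Longrightarrow> keys a \<subseteq> S \<Longrightarrow> mon_deg a = (\<Sum>j\<in>S. lookup a j)"
  unfolding mon_deg_def by (rule sum.mono_neutral_left) (auto simp: in_keys_iff)

lemma mon_deg_add: "mon_deg (a + b) = mon_deg a + mon_deg b"
  using mon_deg_superset[of "keys a \<union> keys b"] by (simp add: keys_add_exponents lookup_add sum.distrib)

lemma mon_deg_single: "mon_deg (single j k) = k"
  by (simp add: mon_deg_def)

lemma form_in_0 [simp]: "form_in V d 0"
  by (simp add: form_in_def)

lemma form_in_add: "form_in V d p \<Longrightarrow> form_in V d q \<Longrightarrow> form_in V d (p + q)"
  unfolding form_in_def using keys_add[of p q] by auto

lemma form_in_diff: "form_in V d p \<Longrightarrow> form_in V d q \<Longrightarrow> form_in V d (p - q)"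
  unfolding form_in_def by (metis (no_types, lifting) Un_iff keys_diff subsetD)

lemma form_in_mconst_mult: "form_in V d p \<Longrightarrow> form_in V d (mconst c * p)"
  unfolding form_in_def using keys_mconst_mult[of c p] by auto

lemma form_in_sum: "(\<And>i. i \<in> I \<Longrightarrow> form_in V d (p i)) \<Longrightarrow> form_in V d (\<Sum>i\<in>I. p i)"
  by (induction I rule: infinite_finite_induct) (auto intro: form_in_add)

lemma form_in_mono: "form_in V d p \<Longrightarrow> V \<subseteq> W \<Longrightarrow> form_in W d p"
  unfolding form_in_def by blast

lemma form_in_single: "mon_deg a = d \<Longrightarrow> keys a \<subseteq> V \<Longrightarrow> form_in V d (single a c)"
  unfolding form_in_def by auto

lemma form_in_mult:
  assumes "form_in V d p" "form_in W e q"
  shows "form_in (V \<union> W) (d + e) (p * q)"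
  unfolding form_in_def
proof
  fix g assume "g \<in> keys (p * q)"
  then obtain a b where "g = a + b" "a \<in> keys p" "b \<in> keys q"
    using keys_mult by blast
  with assms show "mon_deg g = d + e \<and> keys g \<subseteq> V \<union> W"
    unfolding form_in_def by (auto simp: mon_deg_add keys_add_exponents)
qed

lemma form_in_imp_poly_in: "form_in V d p \<Longrightarrow> poly_in V p"
  unfolding form_in_def poly_in_def by blast

lemma poly_in_mult: "poly_in V p \<Longrightarrow> poly_in V q \<Longrightarrow> poly_in V (p * q)"
  unfolding poly_in_def by (fastforce simp: keys_add_exponents dest!: set_mp[OF keys_mult])

lemma keys_diff_act: "g \<in> keys (\<theta> \<circ>\<^sub>D f) \<Longrightarrow> \<exists>a\<in>keys \<theta>. g + a \<in> keys f"
  by (rule ccontr) (auto simp: lookup_diff_act in_keys_iff intro!: sum.neutral)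

lemma form_in_diff_act:
  assumes "form_in A e \<theta>" "form_in V d f"
  shows "form_in V (d - e) (\<theta> \<circ>\<^sub>D f)"
  unfolding form_in_def
proof
  fix g assume "g \<in> keys (\<theta> \<circ>\<^sub>D f)"
  then obtain a where "a \<in> keys \<theta>" "g + a \<in> keys f" using keys_diff_act by blast
  with assms have "mon_deg (g + a) = d" "keys (g + a) \<subseteq> V" "mon_deg a = e"
    unfolding form_in_def by auto
  then show "mon_deg g = d - e \<and> keys g \<subseteq> V"
    by (auto simp: mon_deg_add keys_add_exponents)
qed

lemma subspace_forms: "mpoly_vs.subspace {p. form_in V d p}"
  unfolding mpoly_vs.subspace_def by (auto intro: form_in_add form_in_mconst_mult)

definition bin_exp :: "nat \<Rightarrow> nat \<Rightarrow> nat \<Rightarrow> nat \<Rightarrow> (nat \<Rightarrow>\<^sub>0 nat)" where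
  "bin_exp u v m s = single u s + single v (m - s)"

lemma lookup_bin_exp:
  "u \<noteq> v \<Longrightarrow> lookup (bin_exp u v m s) j = (if j = u then s else if j = v then m - s else 0)"
  by (auto simp: bin_exp_def lookup_add lookup_single)

lemma bin_exp_inj: "u \<noteq> v \<Longrightarrow> bin_exp u v m s = bin_exp u v m s' \<Longrightarrow> s = s'"
  by (metis lookup_bin_exp)

lemma bin_exp_add:
  "u \<noteq> v \<Longrightarrow> s \<le> m \<Longrightarrow> a \<le> k \<Longrightarrow>
    bin_exp u v m s + bin_exp u v k a = bin_exp u v (m + k) (s + a)"
  by (rule poly_mapping_eqI) (auto simp: lookup_add lookup_bin_exp)

lemma form_in_single_bin_exp: "s \<le> m \<Longrightarrow> form_in {u, v} m (single (bin_exp u v m s) c)"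
  by (rule form_in_single) (auto simp: bin_exp_def mon_deg_add mon_deg_single keys_add_exponents)

lemma keys_binary_form:
  assumes uv: "u \<noteq> v" and p: "form_in {u, v} m p" and g: "g \<in> keys p"
  obtains s where "s \<le> m" "g = bin_exp u v m s"
proof
  have kg: "keys g \<subseteq> {u, v}" and "mon_deg g = m" using p g unfolding form_in_def by auto
  with uv show m: "lookup g u \<le> m"
    by (simp add: mon_deg_superset[of "{u, v}"])
  show "g = bin_exp u v m (lookup g u)"
  proof (rule poly_mapping_eqI)
    fix j
    have "m = lookup g u + lookup g v"
      using uv \<open>mon_deg g = m\<close> kg by (simp add: mon_deg_superset[of "{u, v}"])
    then show "lookup g j = lookup (bin_exp u v m (lookup g u)) j"
      using kg uv by (auto simp: lookup_bin_exp in_keys_iff)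
  qed
qed

text \<open>The least exponent of \<open>u\<close> in a binary form of degree \<open>m\<close>; its value for \<open>p = 0\<close> is
  unspecified.\<close>
definition low_exp :: "nat \<Rightarrow> nat \<Rightarrow> nat \<Rightarrow> 'a::zero mpoly \<Rightarrow> nat" where
  "low_exp u v m p = (LEAST s. lookup p (bin_exp u v m s) \<noteq> 0)"

lemma lookup_less_low_exp: "s < low_exp u v m p \<Longrightarrow> lookup p (bin_exp u v m s) = 0"
  unfolding low_exp_def by (rule not_less_Least[THEN notnotD])

lemma low_exp:
  assumes "u \<noteq> v" "form_in {u, v} m p" "p \<noteq> 0"
  shows lookup_low_exp: "lookup p (bin_exp u v m (low_exp u v m p)) \<noteq> 0"
    and low_exp_le: "low_exp u v m p \<le> m"
proof -
  obtain g where "g \<in> keys p" using \<open>p \<noteq> 0\<close> keys_eq_empty by blast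
  then obtain s where s: "s \<le> m" "lookup p (bin_exp u v m s) \<noteq> 0"
    using keys_binary_form[OF assms(1,2)] by (metis in_keys_iff)
  then show "lookup p (bin_exp u v m (low_exp u v m p)) \<noteq> 0"
    unfolding low_exp_def by (metis (mono_tags, lifting) LeastI)
  show "low_exp u v m p \<le> m"
    using s unfolding low_exp_def by (meson Least_le le_trans)
qed

lemma low_exp_eqI:
  "lookup p (bin_exp u v m l) \<noteq> 0 \<Longrightarrow> (\<And>s. s < l \<Longrightarrow> lookup p (bin_exp u v m s) = 0) \<Longrightarrow>
     low_exp u v m p = l"
  unfolding low_exp_def by (rule Least_equality) (auto simp: not_less[symmetric])

lemma low_exp_single: "u \<noteq> v \<Longrightarrow> low_exp u v m (single (bin_exp u v m s) (1::'a::zero_neq_one)) = s"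
  by (rule low_exp_eqI) (auto simp: lookup_single when_def dest: bin_exp_inj)

lemma low_exp_less_after_cancel:
  fixes x y :: "'a::field mpoly"
  assumes uv: "u \<noteq> v" and x: "form_in {u, v} m x" "x \<noteq> 0" and y: "form_in {u, v} m y" "y \<noteq> 0"
    and same_low: "low_exp u v m y = low_exp u v m x"
    and c: "c = lookup x (bin_exp u v m (low_exp u v m x)) / lookup y (bin_exp u v m (low_exp u v m x))"
    and nonzero: "x - mconst c * y \<noteq> 0"
  shows "low_exp u v m x < low_exp u v m (x - mconst c * y)"
proof (rule ccontr)
  let ?l = "low_exp u v m x" and ?x' = "x - mconst c * y"
  assume "\<not> ?thesis"
  moreover have "lookup ?x' (bin_exp u v m s) = 0" if "s \<le> ?l" for s
  proof (cases "s < ?l")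
    case True
    then show ?thesis using same_low by (simp add: lookup_minus lookup_mconst_mult lookup_less_low_exp)
  next
    case False
    with that have "s = ?l" by simp
    moreover have "lookup y (bin_exp u v m ?l) \<noteq> 0" using lookup_low_exp[OF uv y] same_low by simp
    ultimately show ?thesis by (simp add: lookup_minus lookup_mconst_mult c)
  qed
  moreover have "form_in {u, v} m ?x'"
    using x y by (intro form_in_diff form_in_mconst_mult)
  then have "lookup ?x' (bin_exp u v m (low_exp u v m ?x')) \<noteq> 0"
    by (rule lookup_low_exp[OF uv _ nonzero])
  ultimately show False by (simp add: not_less)
qed

text \<open>Gaussian elimination on lowest terms: if every nonzero element of \<open>V\<close> shares its lowest
  exponent with some element of \<open>X\<close>, subtracting multiples of those raises the lowest exponent.\<close>
lemma subset_span_by_low_exp: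
  assumes uv: "u \<noteq> v"
    and forms: "\<forall>x\<in>V. form_in {u, v} m x"
    and closed: "\<forall>x\<in>V. \<forall>y\<in>X. \<forall>c. x - mconst c * y \<in> V"
    and cover: "\<forall>x\<in>V. x \<noteq> 0 \<longrightarrow>
      (\<exists>y\<in>X. y \<noteq> 0 \<and> form_in {u, v} m y \<and> low_exp u v m y = low_exp u v m x)"
  shows "V \<subseteq> mpoly_vs.span X"
proof
  fix x assume "x \<in> V"
  then show "x \<in> mpoly_vs.span X"
  proof (induction "m + 1 - low_exp u v m x" arbitrary: x rule: less_induct)
    case less
    show ?case
    proof (cases "x = 0")
      case True
      then show ?thesis by (simp add: mpoly_vs.span_zero)
    next
      case False
      then obtain y where y: "y \<in> X" "y \<noteq> 0" "form_in {u, v} m y" "low_exp u v m y = low_exp u v m x"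
        using cover less.prems by blast
      define c where "c = lookup x (bin_exp u v m (low_exp u v m x)) / lookup y (bin_exp u v m (low_exp u v m x))"
      define x' where "x' = x - mconst c * y"
      have "x' \<in> V" using closed less.prems y(1) by (simp add: x'_def)
      have "x' \<in> mpoly_vs.span X"
      proof (cases "x' = 0")
        case True
        then show ?thesis by (simp add: mpoly_vs.span_zero)
      next
        case False
        have fx: "form_in {u, v} m x" and fx': "form_in {u, v} m x'"
          using forms less.prems \<open>x' \<in> V\<close> by auto
        have "low_exp u v m x < low_exp u v m x'"
          unfolding x'_def using False
          by (intro low_exp_less_after_cancel[OF uv fx \<open>x \<noteq> 0\<close> y(3,2,4) c_def]) (simp add: x'_def)
        moreover have "low_exp u v m x' \<le> m" by (rule low_exp_le[OF uv fx' False])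
        ultimately show ?thesis using less.hyps[OF _ \<open>x' \<in> V\<close>] by simp
      qed
      moreover have "mconst c * y \<in> mpoly_vs.span X"
        using y(1) by (simp add: mpoly_vs.span_base mpoly_vs.span_scale)
      ultimately show ?thesis
        unfolding x'_def using mpoly_vs.span_add by fastforce
    qed
  qed
qed

lemma binary_form_in_span:
  assumes uv: "u \<noteq> v"
    and cover: "\<forall>s\<le>m. \<exists>y\<in>X. y \<noteq> 0 \<and> form_in {u, v} m y \<and> low_exp u v m y = s"
    and t: "form_in {u, v} m t"
  shows "t \<in> mpoly_vs.span X"
proof -
  let ?X = "X \<inter> {y. form_in {u, v} m y}"
  have "{t. form_in {u, v} m t} \<subseteq> mpoly_vs.span ?X"
  proof (rule subset_span_by_low_exp[OF uv])
    show "\<forall>x\<in>{t. form_in {u, v} m t}. \<forall>y\<in>?X. \<forall>c. x - mconst c * y \<in> {t. form_in {u, v} m t}"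
      by (auto intro: form_in_diff form_in_mconst_mult)
    show "\<forall>x\<in>{t. form_in {u, v} m t}. x \<noteq> 0 \<longrightarrow>
        (\<exists>y\<in>?X. y \<noteq> 0 \<and> form_in {u, v} m y \<and> low_exp u v m y = low_exp u v m x)"
    proof (intro ballI impI)
      fix x assume "x \<in> {t. form_in {u, v} m t}" "x \<noteq> 0"
      then have "low_exp u v m x \<le> m" using low_exp_le[OF uv] by simp
      then obtain y where "y \<in> X" "y \<noteq> 0" "form_in {u, v} m y" "low_exp u v m y = low_exp u v m x"
        using cover by blast
      then show "\<exists>y\<in>?X. y \<noteq> 0 \<and> form_in {u, v} m y \<and> low_exp u v m y = low_exp u v m x"
        by blast
    qed
  qed simp
  then show ?thesis using t mpoly_vs.span_mono[of ?X X] by blast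
qed

lemma card_le_card_low_exps:
  assumes uv: "u \<noteq> v" and V: "mpoly_vs.subspace V" "\<forall>x\<in>V. form_in {u, v} m x"
    and B: "B \<subseteq> V" "mpoly_vs.independent B"
  shows "card B \<le> card (low_exp u v m ` (V - {0}))"
proof -
  let ?L = "low_exp u v m ` (V - {0})"
  have "?L \<subseteq> {..m}" using low_exp_le[OF uv] V(2) by auto
  then have "finite ?L" by (rule finite_subset) simp
  have "\<forall>l\<in>?L. \<exists>x. x \<in> V \<and> x \<noteq> 0 \<and> low_exp u v m x = l" by blast
  then obtain rep where rep: "\<forall>l\<in>?L. rep l \<in> V \<and> rep l \<noteq> 0 \<and> low_exp u v m (rep l) = l"
    by (rule bchoice[THEN exE]) blast
  have "V \<subseteq> mpoly_vs.span (rep ` ?L)"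
  proof (rule subset_span_by_low_exp[OF uv V(2)])
    show "\<forall>x\<in>V. \<forall>y\<in>rep ` ?L. \<forall>c. x - mconst c * y \<in> V"
      using rep V(1) by (auto intro: mpoly_vs.subspace_diff mpoly_vs.subspace_scale)
    show "\<forall>x\<in>V. x \<noteq> 0 \<longrightarrow>
        (\<exists>y\<in>rep ` ?L. y \<noteq> 0 \<and> form_in {u, v} m y \<and> low_exp u v m y = low_exp u v m x)"
    proof (intro ballI impI)
      fix x assume "x \<in> V" "x \<noteq> 0"
      then have "low_exp u v m x \<in> ?L" by blast
      with rep V(2) show "\<exists>y\<in>rep ` ?L. y \<noteq> 0 \<and> form_in {u, v} m y \<and> low_exp u v m y = low_exp u v m x"
        by (intro bexI[of _ "rep (low_exp u v m x)"]) auto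
    qed
  qed
  then have "card B \<le> card (rep ` ?L)"
    using mpoly_vs.independent_span_bound[OF finite_imageI[OF \<open>finite ?L\<close>] B(2)] B(1) by blast
  also have "\<dots> \<le> card ?L" by (rule card_image_le[OF \<open>finite ?L\<close>])
  finally show ?thesis .
qed

lemma exists_in_window:
  assumes L: "L \<subseteq> {..m}" and card: "m + 1 < card L + w" and s: "s + w \<le> m + 1"
  shows "\<exists>l\<in>L. s \<le> l \<and> l < s + w"
proof (rule ccontr)
  assume "\<not> ?thesis"
  with L have "L \<subseteq> {..m} - {s..<s + w}" by auto
  then have "card L \<le> card ({..m} - {s..<s + w})" by (rule card_mono[rotated]) simp
  also have "\<dots> = m + 1 - w"
    using s by (subst card_Diff_subset) auto
  finally show False using card s by linarith
qed

lemma linear_form_annihilates_binary_form: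
  fixes l :: "'a::field_char_0 mpoly"
  assumes uv: "u \<noteq> v" and l: "form_in V 1 l" and m: "1 \<le> m"
  obtains t where "form_in {u, v} m t" "t \<noteq> 0" "l \<circ>\<^sub>D t = 0"
proof -
  define M where "M k s = single (bin_exp u v k s) (1::'a)" for k s
  let ?Y = "M (m - 1) ` {..m - 1}"
  have "l \<circ>\<^sub>D M m s \<in> mpoly_vs.span ?Y" if "s \<le> m" for s
  proof (rule binary_form_in_span[OF uv])
    show "\<forall>s\<le>m - 1. \<exists>y\<in>?Y. y \<noteq> 0 \<and> form_in {u, v} (m - 1) y \<and> low_exp u v (m - 1) y = s"
      by (auto simp: M_def form_in_single_bin_exp low_exp_single[OF uv] single_neq_zero intro!: bexI)
    show "form_in {u, v} (m - 1) (l \<circ>\<^sub>D M m s)"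
      unfolding M_def by (rule form_in_diff_act[OF l form_in_single_bin_exp[OF that]])
  qed
  moreover have "card ?Y < card {..m}"
    using card_image_le[of "{..m - 1}" "M (m - 1)"] m by simp
  ultimately obtain c where c: "\<exists>s\<in>{..m}. c s \<noteq> 0" "(\<Sum>s\<le>m. mconst (c s) * (l \<circ>\<^sub>D M m s)) = 0"
    using mpoly_vs.exists_nontrivial_relation[of "{..m}" ?Y "\<lambda>s. l \<circ>\<^sub>D M m s"] by auto
  define t where "t = (\<Sum>s\<le>m. mconst (c s) * M m s)"
  show ?thesis
  proof
    show "form_in {u, v} m t"
      unfolding t_def M_def by (intro form_in_sum form_in_mconst_mult form_in_single_bin_exp) simp
    have "lookup t (bin_exp u v m s) = (\<Sum>s'\<le>m. if s' = s then c s' else 0)" for s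
      unfolding t_def M_def lookup_sum lookup_mconst_mult
      by (rule sum.cong) (auto simp: lookup_single when_def dest: bin_exp_inj[OF uv])
    with c(1) show "t \<noteq> 0" by (metis atMost_iff lookup_zero sum.delta[OF finite_atMost])
    show "l \<circ>\<^sub>D t = 0"
      using c(2) by (simp add: t_def diff_act_sum_right diff_act_mconst_right)
  qed
qed

lemma diff_act_bin_exp_low_exp:
  fixes x :: "'a::field_char_0 mpoly"
  assumes uv: "u \<noteq> v" and x: "form_in {u, v} m x" "x \<noteq> 0"
    and a: "a \<le> k" "a \<le> low_exp u v m x" "low_exp u v m x - a + k \<le> m"
  defines "w \<equiv> single (bin_exp u v k a) 1 \<circ>\<^sub>D x"
  shows "form_in {u, v} (m - k) w" and "w \<noteq> 0" and "low_exp u v (m - k) w = low_exp u v m x - a"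
proof -
  let ?l = "low_exp u v m x"
  show "form_in {u, v} (m - k) w"
    unfolding w_def by (rule form_in_diff_act[OF form_in_single_bin_exp[OF a(1)] x(1)])
  have lookup_w: "lookup w (bin_exp u v (m - k) s) =
      lookup x (bin_exp u v m (s + a)) * deriv_factor (bin_exp u v (m - k) s) (bin_exp u v k a)"
    if "s \<le> m - k" for s
    using bin_exp_add[OF uv that a(1)] a by (simp add: w_def lookup_single_diff_act)
  have "lookup w (bin_exp u v (m - k) (?l - a)) \<noteq> 0"
    using lookup_w[of "?l - a"] a lookup_low_exp[OF uv x] deriv_factor_nonzero by simp
  moreover have "lookup w (bin_exp u v (m - k) s) = 0" if "s < ?l - a" for s
    using lookup_w[of s] that a lookup_less_low_exp[of "s + a" u v m x] by simp
  ultimately show "w \<noteq> 0" and "low_exp u v (m - k) w = ?l - a"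
    by (auto intro: low_exp_eqI)
qed

lemma lookup_single_one_mult: "lookup (single e 1 * p) (g + e) = lookup (p::'a::comm_ring_1 mpoly) g"
proof (induction p rule: update_induct)
  case const
  then show ?case by simp
next
  case (update p k c)
  then show ?case
    by (simp add: update_eq_add_single distrib_left lookup_add mult_single lookup_single when_def
        lookup_update add.commute[of e])
qed

lemma diff_act_var_free:
  assumes "\<forall>b\<in>keys h. i \<notin> keys b"
  shows "mvar i \<circ>\<^sub>D h = (0::'a::field_char_0 mpoly)"
proof (rule poly_mapping_eqI)
  fix g
  have "g + single i 1 \<notin> keys h" using assms by (auto simp: keys_add_exponents)
  then show "lookup (mvar i \<circ>\<^sub>D h) g = lookup 0 g"
    unfolding mvar_def lookup_single_diff_act by (simp add: in_keys_iff)
qed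

lemma diff_act_var_mult_var:
  assumes "\<forall>b\<in>keys p. i \<notin> keys b"
  shows "mvar i \<circ>\<^sub>D (mvar i * p) = (p::'a::field_char_0 mpoly)"
proof (rule poly_mapping_eqI)
  fix g
  have "lookup p g * deriv_factor g (single i 1) = (lookup p g :: 'a)"
    using assms deriv_factor_var[of i g] by (cases "g \<in> keys p") (auto simp: in_keys_iff)
  then show "lookup (mvar i \<circ>\<^sub>D (mvar i * p)) g = lookup p g"
    unfolding mvar_def lookup_single_diff_act lookup_single_one_mult by simp
qed

lemma diff_act_var_mult_other:
  assumes "\<forall>b\<in>keys p. i \<notin> keys b" "i' \<noteq> i"
  shows "mvar i \<circ>\<^sub>D (mvar i' * p) = (0::'a::field_char_0 mpoly)"
proof (rule diff_act_var_free, intro ballI)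
  fix b assume "b \<in> keys (mvar i' * p)"
  then obtain x y where "b = x + y" "x \<in> keys (mvar i' :: 'a mpoly)" "y \<in> keys p"
    using keys_mult by blast
  then show "i \<notin> keys b" using assms by (auto simp: mvar_def keys_add_exponents)
qed

lemma diff_act_var_perazzo:
  fixes P :: "nat \<Rightarrow> 'a::field_char_0 mpoly"
  assumes P: "\<forall>i\<le>n. form_in (uv_vars n) e (P i)" and g: "form_in (uv_vars n) d g" and i: "i \<le> n"
  shows "mvar i \<circ>\<^sub>D ((\<Sum>i'\<le>n. mvar i' * P i') + g) = P i"
proof -
  have free: "\<forall>b\<in>keys p. i \<notin> keys b" if "form_in (uv_vars n) k p" for k p
    using that i unfolding form_in_def uv_vars_def by fastforce
  have "mvar i \<circ>\<^sub>D (mvar i' * P i') = (if i' = i then P i' else 0)" if "i' \<le> n" for i'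
  proof -
    have "\<forall>b\<in>keys (P i'). i \<notin> keys b" using free P that by blast
    then show ?thesis by (cases "i' = i") (simp_all add: diff_act_var_mult_var diff_act_var_mult_other)
  qed
  then show ?thesis
    using i by (simp add: diff_act_add_right diff_act_sum_right diff_act_var_free[OF free[OF g]])
qed

lemma subspace_derivatives: "mpoly_vs.subspace {\<theta> \<circ>\<^sub>D f | \<theta>. form_in V j \<theta>}"
  unfolding mpoly_vs.subspace_def
proof (intro conjI ballI allI)
  show "0 \<in> {\<theta> \<circ>\<^sub>D f | \<theta>. form_in V j \<theta>}"
    by (metis (mono_tags, lifting) diff_act_0_left form_in_0 mem_Collect_eq)
  fix x y assume "x \<in> {\<theta> \<circ>\<^sub>D f | \<theta>. form_in V j \<theta>}" "y \<in> {\<theta> \<circ>\<^sub>D f | \<theta>. form_in V j \<theta>}"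
  then show "x + y \<in> {\<theta> \<circ>\<^sub>D f | \<theta>. form_in V j \<theta>}"
    by (auto simp flip: diff_act_add_left intro: form_in_add)
next
  fix c x assume "x \<in> {\<theta> \<circ>\<^sub>D f | \<theta>. form_in V j \<theta>}"
  then show "mconst c * x \<in> {\<theta> \<circ>\<^sub>D f | \<theta>. form_in V j \<theta>}"
    by (auto simp flip: diff_act_mconst_left intro: form_in_mconst_mult)
qed

lemma binary_forms_are_derivatives:
  fixes P :: "nat \<Rightarrow> 'a::field_char_0 mpoly"
  assumes P: "\<forall>i\<le>n. form_in (uv_vars n) (d - 1) (P i)"
    and indep: "\<forall>c. (\<Sum>i\<le>n. mconst (c i) * P i) = 0 \<longrightarrow> (\<forall>i\<le>n. c i = 0)"
    and dP: "\<forall>i\<le>n. mvar i \<circ>\<^sub>D f = P i"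
    and j: "1 \<le> j" "j < d" "d \<le> n + j"
    and t: "form_in (uv_vars n) (d - j) t"
  obtains \<theta> where "form_in (all_vars n) j \<theta>" "\<theta> \<circ>\<^sub>D f = t"
proof -
  define u v where "u = n + 1" and "v = n + 2"
  have uv: "u \<noteq> v" and uv_vars: "uv_vars n = {u, v}" and uv_all: "{u, v} \<subseteq> all_vars n"
    by (auto simp: u_def v_def uv_vars_def all_vars_def)
  define D where "D i = {\<theta> \<circ>\<^sub>D f | \<theta>. form_in (all_vars n) i \<theta>}" for i
  define V where "V = mpoly_vs.span (P ` {..n})"
  have V_forms: "\<forall>x\<in>V. form_in {u, v} (d - 1) x"
    using mpoly_vs.span_minimal[OF _ subspace_forms, of "P ` {..n}"] P uv_vars by (auto simp: V_def)
  have V_D1: "V \<subseteq> D 1"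
  proof -
    have "form_in (all_vars n) 1 (mvar i)" if "i \<le> n" for i
      unfolding mvar_def using that by (intro form_in_single) (auto simp: mon_deg_single all_vars_def)
    then have "P ` {..n} \<subseteq> D 1" using dP unfolding D_def by force
    then show ?thesis unfolding V_def D_def by (intro mpoly_vs.span_minimal subspace_derivatives)
  qed
  let ?L = "low_exp u v (d - 1) ` (V - {0})"
  have L_le: "?L \<subseteq> {..d - 1}" using low_exp_le[OF uv] V_forms by auto
  have "inj_on P {..n}" and "mpoly_vs.independent (P ` {..n})"
    using mpoly_vs.independent_image_if_coeffs_zero[of "{..n}" P] indep by auto
  then have "n + 1 \<le> card ?L"
    using card_le_card_low_exps[OF uv _ V_forms, of "P ` {..n}"]
    by (simp add: V_def card_image mpoly_vs.span_superset)
  have cover: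
    "\<forall>s\<le>d - j. \<exists>w\<in>D j. w \<noteq> 0 \<and> form_in {u, v} (d - j) w \<and> low_exp u v (d - j) w = s"
  proof (intro allI impI)
    fix s assume s: "s \<le> d - j"
    have "\<exists>l\<in>?L. s \<le> l \<and> l < s + j"
      by (rule exists_in_window[OF L_le]) (use \<open>n + 1 \<le> card ?L\<close> j s in linarith)+
    then obtain l where l: "l \<in> ?L" "s \<le> l" "l < s + j" by blast
    then obtain x where x: "x \<in> V" "x \<noteq> 0" "low_exp u v (d - 1) x = l" by blast
    then obtain \<theta> where \<theta>: "form_in (all_vars n) 1 \<theta>" "\<theta> \<circ>\<^sub>D f = x"
      using V_D1 unfolding D_def by blast
    define w where "w = single (bin_exp u v (j - 1) (l - s)) 1 \<circ>\<^sub>D x"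
    have "d - 1 - (j - 1) = d - j" using j by simp
    then have "form_in {u, v} (d - j) w" "w \<noteq> 0" "low_exp u v (d - j) w = s"
      using diff_act_bin_exp_low_exp[OF uv V_forms[rule_format, OF x(1)] x(2), of "l - s" "j - 1"]
        x(3) l j s by (simp_all add: w_def)
    moreover have "w \<in> D j"
    proof -
      have "form_in ({u, v} \<union> all_vars n) (j - 1 + 1) (single (bin_exp u v (j - 1) (l - s)) 1 * \<theta>)"
        using l by (intro form_in_mult[OF form_in_single_bin_exp \<theta>(1)]) simp
      moreover have "{u, v} \<union> all_vars n = all_vars n" "j - 1 + 1 = j" using uv_all j(1) by auto
      ultimately have "form_in (all_vars n) j (single (bin_exp u v (j - 1) (l - s)) 1 * \<theta>)"
        by simp
      then show ?thesis unfolding D_def w_def \<theta>(2)[symmetric] diff_act_mult[symmetric] by blast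
    qed
    ultimately show "\<exists>w\<in>D j. w \<noteq> 0 \<and> form_in {u, v} (d - j) w \<and> low_exp u v (d - j) w = s"
      by blast
  qed
  have "t \<in> mpoly_vs.span (D j)"
    using binary_form_in_span[OF uv cover] t uv_vars by simp
  then have "t \<in> D j"
    unfolding D_def by (simp add: mpoly_vs.span_eq_iff[THEN iffD2, OF subspace_derivatives])
  then show ?thesis using that unfolding D_def by blast
qed

lemma not_mult_injective:
  assumes \<theta>: "form_in (all_vars n) k \<theta>" and l: "poly_in (all_vars n) l"
    and nonzero: "\<theta> \<circ>\<^sub>D f \<noteq> 0" and killed: "l \<circ>\<^sub>D (\<theta> \<circ>\<^sub>D f) = 0"
  shows "\<not> mult_injective n f l k"
proof
  have "l * \<theta> \<in> Ann n f"
    using poly_in_mult[OF l form_in_imp_poly_in[OF \<theta>]] killed by (simp add: Ann_def diff_act_mult)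
  moreover assume "mult_injective n f l k"
  ultimately have "\<theta> \<in> Ann n f" using \<theta> unfolding mult_injective_def by blast
  with nonzero show False by (simp add: Ann_def)
qed

text \<open>If \<open>\<psi> \<equiv> \<ell>\<theta>'\<close> modulo \<open>Ann f\<close> for a monomial \<open>\<psi>\<close> of \<open>t = \<omega> \<circ> f\<close>, then multiplying by
  \<open>\<omega>\<close> gives \<open>\<psi> \<circ> t = \<theta>' \<circ> (\<ell> \<circ> t) = 0\<close>, whereas \<open>\<psi> \<circ> t\<close> has a nonzero constant term.\<close>
lemma not_mult_surjective:
  assumes t: "form_in (all_vars n) (k + 1) t" "t \<noteq> 0" and killed: "l \<circ>\<^sub>D t = 0"
    and \<omega>: "\<omega> \<circ>\<^sub>D f = t"
  shows "\<not> mult_surjective n f l k"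
proof
  obtain g where g: "g \<in> keys t" using t(2) keys_eq_empty by blast
  define \<psi> where "\<psi> = single g (1::'a)"
  have "form_in (all_vars n) (k + 1) \<psi>"
    unfolding \<psi>_def using t(1) g unfolding form_in_def by auto
  moreover assume "mult_surjective n f l k"
  ultimately obtain \<theta> where "(\<psi> - l * \<theta>) \<circ>\<^sub>D f = 0"
    unfolding mult_surjective_def Ann_def by blast
  then have "(\<omega> * (\<psi> - l * \<theta>)) \<circ>\<^sub>D f = 0" by (simp add: diff_act_mult)
  moreover have "\<omega> * (\<psi> - l * \<theta>) = \<psi> * \<omega> - \<theta> * (l * \<omega>)" by (simp add: algebra_simps)
  ultimately have "\<psi> \<circ>\<^sub>D t = 0" by (simp add: diff_act_diff_left diff_act_mult \<omega> killed)
  then have "lookup (\<psi> \<circ>\<^sub>D t) 0 = 0" by simp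
  with g show False by (simp add: \<psi>_def lookup_single_diff_act in_keys_iff deriv_factor_nonzero)
qed

theorem corollary4p6:
  fixes f :: "'a::field_char_0 mpoly" and n d :: nat
  assumes "alg_closed_field TYPE('a)"
    and "n \<ge> 2" and "d \<ge> n + 1"
    and "perazzo_form n d f"
    and "has_WLP n f"
  shows "d \<ge> 2 * n"
proof (rule ccontr)
  assume "\<not> d \<ge> 2 * n"
  from \<open>perazzo_form n d f\<close> obtain P g where
    P: "\<forall>i\<le>n. form_in (uv_vars n) (d - 1) (P i)" and g: "form_in (uv_vars n) d g"
    and indep: "\<forall>c. (\<Sum>i\<le>n. mconst (c i) * P i) = 0 \<longrightarrow> (\<forall>i\<le>n. c i = 0)"
    and f: "f = (\<Sum>i\<le>n. mvar i * P i) + g"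
    unfolding perazzo_form_def by blast
  from \<open>has_WLP n f\<close> obtain l where l: "form_in (all_vars n) 1 l"
    and wlp: "\<forall>i. mult_injective n f l i \<or> mult_surjective n f l i"
    unfolding has_WLP_def by blast
  have dP: "\<forall>i\<le>n. mvar i \<circ>\<^sub>D f = P i" using diff_act_var_perazzo[OF P g] f by simp
  note derivative = binary_forms_are_derivatives[OF P indep dP]
  have uv: "uv_vars n = {n + 1, n + 2}" "uv_vars n \<subseteq> all_vars n"
    by (auto simp: uv_vars_def all_vars_def)
  define k where "k = d - n"
  have k: "1 \<le> k" "k < d" "d \<le> n + k" "d - k = n"
    and n_1: "1 \<le> n - 1" "n - 1 < d" "d \<le> n + (n - 1)" "d - (n - 1) = k + 1"
    using assms(2,3) \<open>\<not> d \<ge> 2 * n\<close> by (auto simp: k_def)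
  obtain t where t: "form_in (uv_vars n) (d - k) t" "t \<noteq> 0" "l \<circ>\<^sub>D t = 0"
    using linear_form_annihilates_binary_form[of "n + 1" "n + 2" _ l n] l assms(2) k(4) uv(1) by auto
  obtain \<theta> where "form_in (all_vars n) k \<theta>" "\<theta> \<circ>\<^sub>D f = t"
    using derivative[OF k(1-3) t(1)] by blast
  then have "\<not> mult_injective n f l k"
    using not_mult_injective form_in_imp_poly_in[OF l] t(2,3) by blast
  obtain t' where t': "form_in (uv_vars n) (d - (n - 1)) t'" "t' \<noteq> 0" "l \<circ>\<^sub>D t' = 0"
    using linear_form_annihilates_binary_form[of "n + 1" "n + 2" _ l "k + 1"] l n_1(4) uv(1) by auto
  obtain \<omega> where \<omega>: "\<omega> \<circ>\<^sub>D f = t'"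
    using derivative[OF n_1(1-3) t'(1)] by blast
  have "\<not> mult_surjective n f l k"
    by (rule not_mult_surjective[OF _ t'(2,3) \<omega>]) (use form_in_mono[OF t'(1) uv(2)] n_1(4) in simp)
  with wlp \<open>\<not> mult_injective n f l k\<close> show False by blast
qed

end
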